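(* Let $\varepsilon>0$, $c>0$, and let $G$ be a graph with $m$ edges, clique number $\omega=\omega(G)\ge 3$, and $t(G)\le c\,m^{1.5-\varepsilon}$. If $m\ge \big(10.06\,c\sqrt{\omega}\big)^{1/\varepsilon}$, then \[\Lambda_\ell(G)\le 2\left(1-\frac{1}{\omega}\right),\] where $\ell=\min\{n^+,\omega\}$.
   Context: For a simple graph $G$ on $n$ vertices and $m$ edges, let $\lambda_1\ge\cdots\ge\lambda_n$ be the eigenvalues of its adjacency matrix; $n^+$ is the number of positive eigenvalues. $\omega(G)$ is the clique number and $t(G)$ the number of triangles. $s_k(G)=\sum_{i=1}^k\lambda_i^2$ and $\Lambda_k(G)=s_k(G)/m$. *)

theory Defs
  imports "Jordan_Normal_Form.Char_Poly" "HOL-Library.Multiset"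
begin

definition simple_graph :: "nat \<Rightarrow> (nat \<Rightarrow> nat \<Rightarrow> bool) \<Rightarrow> bool" where
  "simple_graph n E \<longleftrightarrow> (\<forall>i<n. \<not> E i i) \<and> (\<forall>i<n. \<forall>j<n. E i j \<longleftrightarrow> E j i)"

definition adj_matrix :: "nat \<Rightarrow> (nat \<Rightarrow> nat \<Rightarrow> bool) \<Rightarrow> real mat" where
  "adj_matrix n E = mat n n (\<lambda>(i,j). if E i j then 1 else 0)"

definition eig_mset :: "nat \<Rightarrow> (nat \<Rightarrow> nat \<Rightarrow> bool) \<Rightarrow> real multiset" where
  "eig_mset n E = proots (char_poly (adj_matrix n E))"

(* eigenvalues in non-increasing order: lambda_1 = eigs ! 0 >= lambda_2 = eigs ! 1 >= ... *)
definition eigs :: "nat \<Rightarrow> (nat \<Rightarrow> nat \<Rightarrow> bool) \<Rightarrow> real list" where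
  "eigs n E = rev (sorted_list_of_multiset (eig_mset n E))"

definition n_pos :: "nat \<Rightarrow> (nat \<Rightarrow> nat \<Rightarrow> bool) \<Rightarrow> nat" where
  "n_pos n E = size (filter_mset (\<lambda>x. x > 0) (eig_mset n E))"

definition num_edges :: "nat \<Rightarrow> (nat \<Rightarrow> nat \<Rightarrow> bool) \<Rightarrow> nat" where
  "num_edges n E = card {(i,j). i < j \<and> j < n \<and> E i j}"

definition is_clique :: "nat \<Rightarrow> (nat \<Rightarrow> nat \<Rightarrow> bool) \<Rightarrow> nat set \<Rightarrow> bool" where
  "is_clique n E S \<longleftrightarrow> S \<subseteq> {..<n} \<and> (\<forall>i\<in>S. \<forall>j\<in>S. i \<noteq> j \<longrightarrow> E i j)"

definition clique_number :: "nat \<Rightarrow> (nat \<Rightarrow> nat \<Rightarrow> bool) \<Rightarrow> nat" where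
  "clique_number n E = Max (card ` {S. is_clique n E S})"

definition num_triangles :: "nat \<Rightarrow> (nat \<Rightarrow> nat \<Rightarrow> bool) \<Rightarrow> nat" where
  "num_triangles n E = card {S. is_clique n E S \<and> card S = 3}"

definition s_k :: "nat \<Rightarrow> (nat \<Rightarrow> nat \<Rightarrow> bool) \<Rightarrow> nat \<Rightarrow> real" where
  "s_k n E k = (\<Sum>i<k. (eigs n E ! i)^2)"

definition Lambda_k :: "nat \<Rightarrow> (nat \<Rightarrow> nat \<Rightarrow> bool) \<Rightarrow> nat \<Rightarrow> real" where
  "Lambda_k n E k = s_k n E k / real (num_edges n E)"

end

theory Submission
  imports Defs "Jordan_Normal_Form.Schur_Decomposition" "HOL-Analysis.Convex"
begin

(* The adjacency matrix A is real symmetric, so its eigenvalues l_1 >= ... >= l_n are real, with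
   sum l_i^2 = tr A^2 = 2m and sum l_i^3 = tr A^3 = 6t. Let P and C be the sums of l_i^2 and l_i^3
   over the first ell eigenvalues, which are positive, and let R = 2m - P. The power mean inequality
   gives P^3 <= ell C^2 <= omega C^2, and every remaining eigenvalue satisfies |l_i| <= sqrt R, so the
   remaining cubes sum to at least -R^(3/2). If P exceeded 2m (1 - 1/omega), then 6t >= C - R^(3/2)
   would exceed 6 m^(3/2) / (10.06 sqrt omega); but the hypotheses on t and m give
   t <= c m^(3/2) / m^eps <= m^(3/2) / (10.06 sqrt omega). *)

section \<open>Real symmetric matrices\<close>

lemma real_symmetric_mat_eigenvalue_real:
  fixes A :: "real mat" and a :: complex
  assumes A: "A \<in> carrier_mat n n"
    and sym: "\<And>i j. i < n \<Longrightarrow> j < n \<Longrightarrow> A $$ (i,j) = A $$ (j,i)"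
    and ev: "eigenvector (map_mat complex_of_real A) v a"
  shows "a \<in> \<real>"
proof -
  let ?B = "map_mat complex_of_real A"
  have v: "v \<in> carrier_vec n" and v0: "v \<noteq> 0\<^sub>v n" and eq: "?B *\<^sub>v v = a \<cdot>\<^sub>v v"
    using ev A unfolding eigenvector_def by auto
  have row: "(\<Sum>j<n. of_real (A $$ (i,j)) * v $ j) = a * v $ i" if "i < n" for i
  proof -
    have "(?B *\<^sub>v v) $ i = (a \<cdot>\<^sub>v v) $ i" using eq by simp
    thus ?thesis using that A v
      by (simp add: mult_mat_vec_def scalar_prod_def row_def atLeast0LessThan)
  qed
  \<comment> \<open>\<open>D = v\<^sup>* A v\<close> is self-conjugate and equals \<open>a\<close> times the positive real \<open>S = v\<^sup>* v\<close>.\<close>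
  define D where "D = (\<Sum>i<n. \<Sum>j<n. of_real (A $$ (i,j)) * v $ j * cnj (v $ i))"
  define S where "S = (\<Sum>i<n. v $ i * cnj (v $ i))"
  have "D = (\<Sum>i<n. (\<Sum>j<n. of_real (A $$ (i,j)) * v $ j) * cnj (v $ i))"
    unfolding D_def by (simp add: sum_distrib_right)
  also have "\<dots> = (\<Sum>i<n. a * (v $ i * cnj (v $ i)))"
    by (intro sum.cong refl) (simp add: row)
  finally have DS: "D = a * S"
    unfolding S_def by (simp add: sum_distrib_left)
  have "cnj D = (\<Sum>i<n. \<Sum>j<n. of_real (A $$ (j,i)) * cnj (v $ i) * v $ j)"
    unfolding D_def cnj_sum by (subst sum.swap) simp
  also have "\<dots> = D"
    unfolding D_def by (intro sum.cong refl) (simp add: sym)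
  finally have D_real: "cnj D = D" .
  obtain i where i: "i < n" "v $ i \<noteq> 0"
    using v v0 by (metis carrier_vecD eq_vecI index_zero_vec)
  have "(\<Sum>i<n. (cmod (v $ i))\<^sup>2) > 0"
    by (rule sum_pos2[of _ i]) (use i in auto)
  moreover have "S = of_real (\<Sum>i<n. (cmod (v $ i))\<^sup>2)"
    unfolding S_def by (simp only: of_real_sum complex_norm_square)
  ultimately have "S \<noteq> 0" "cnj S = S"
    by (auto simp del: of_real_sum)
  with DS D_real have "cnj a = a" by (metis complex_cnj_mult mult_cancel_right)
  thus ?thesis by (metis Reals_cnj_iff)
qed

lemma char_poly_real_symmetric_splits:
  fixes A :: "real mat"
  assumes A: "A \<in> carrier_mat n n"
    and sym: "\<And>i j. i < n \<Longrightarrow> j < n \<Longrightarrow> A $$ (i,j) = A $$ (j,i)"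
  obtains es where "char_poly A = (\<Prod>a\<leftarrow>es. [:-a,1:])" and "length es = n"
proof -
  let ?B = "map_mat complex_of_real A"
  have B: "?B \<in> carrier_mat n n" using A by auto
  obtain as where cp: "char_poly ?B = (\<Prod>a\<leftarrow>as. [:-a,1:])" and len: "length as = n"
    using char_poly_factorized[OF B] by blast
  have real_roots: "of_real (Re a) = a" if "a \<in> set as" for a
  proof -
    have "poly (char_poly ?B) a = 0"
      unfolding cp using that by (simp add: poly_prod_list_zero_iff)
    then obtain v where "eigenvector ?B v a"
      using eigenvalue_root_char_poly[OF B] unfolding eigenvalue_def by blast
    from real_symmetric_mat_eigenvalue_real[OF A sym this] show ?thesis
      by (simp add: complex_is_Real_iff complex_eq_iff)
  qed
  interpret h: map_poly_inj_comm_ring_hom "of_real :: real \<Rightarrow> complex" ..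
  have "map_poly of_real (\<Prod>a\<leftarrow>map Re as. [:-a,1:]) = (\<Prod>a\<leftarrow>as. [:-a,1:] :: complex poly)"
    using real_roots
  proof (induction as)
    case (Cons a as)
    have "map_poly of_real [:-Re a,1:] = [:-complex_of_real (Re a),1:]" by simp
    then have "map_poly of_real [:-Re a,1:] = [:-a,1:]" using Cons.prems by simp
    with Cons show ?case by (simp only: list.map prod_list.Cons h.hom_mult) simp
  qed simp
  also have "\<dots> = map_poly of_real (char_poly A)"
    using cp of_real_hom.char_poly_hom[OF A] by metis
  finally have "(\<Prod>a\<leftarrow>map Re as. [:-a,1:]) = char_poly A"
    by (metis h.injectivity)
  with len show ?thesis by (intro that[of "map Re as"]) simp_all
qed

section \<open>Traces of matrix powers\<close>

definition mat_trace :: "'a::comm_ring_1 mat \<Rightarrow> 'a" where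
  "mat_trace A = (\<Sum>i<dim_row A. A $$ (i,i))"

lemma mat_trace_mult_comm:
  fixes X Y :: "'a::comm_ring_1 mat"
  assumes X: "X \<in> carrier_mat n m" and Y: "Y \<in> carrier_mat m n"
  shows "mat_trace (X * Y) = mat_trace (Y * X)"
proof -
  have "mat_trace (X * Y) = (\<Sum>i<n. \<Sum>l<m. X $$ (i,l) * Y $$ (l,i))"
    unfolding mat_trace_def using X Y by (simp add: scalar_prod_def atLeast0LessThan)
  also have "\<dots> = (\<Sum>l<m. \<Sum>i<n. Y $$ (l,i) * X $$ (i,l))"
    by (subst sum.swap) (simp add: mult.commute)
  also have "\<dots> = mat_trace (Y * X)"
    unfolding mat_trace_def using X Y by (simp add: scalar_prod_def atLeast0LessThan)
  finally show ?thesis .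
qed

lemma upper_triangular_mult:
  fixes U V :: "'a::comm_ring_1 mat"
  assumes U: "U \<in> carrier_mat n n" "upper_triangular U"
    and V: "V \<in> carrier_mat n n" "upper_triangular V"
  shows "upper_triangular (U * V)"
    and "i < n \<Longrightarrow> (U * V) $$ (i,i) = U $$ (i,i) * V $$ (i,i)"
proof -
  have entry: "(U * V) $$ (i,j) = (\<Sum>l<n. U $$ (i,l) * V $$ (l,j))" if "i < n" "j < n" for i j
    using that U V by (simp add: scalar_prod_def atLeast0LessThan)
  have vanish: "U $$ (i,l) * V $$ (l,j) = 0" if "j \<le> i" "l \<noteq> i \<or> j < i" "i < n" "l < n" for i j l
  proof (cases "l < i")
    case True
    then show ?thesis using that U by (simp add: upper_triangularD)
  next
    case False
    then have "j < l" using that by auto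
    then show ?thesis using that V by (simp add: upper_triangularD)
  qed
  show "upper_triangular (U * V)"
  proof (rule upper_triangularI)
    fix i j assume "j < i" "i < dim_row (U * V)"
    then show "(U * V) $$ (i,j) = 0"
      using U entry vanish by (simp add: sum.neutral)
  qed
  show "(U * V) $$ (i,i) = U $$ (i,i) * V $$ (i,i)" if i: "i < n"
    using entry[OF i i] vanish[of i i] i by (simp add: sum.remove[of _ i] sum.neutral)
qed

lemma upper_triangular_pow:
  fixes B :: "'a::comm_ring_1 mat"
  assumes B: "B \<in> carrier_mat n n" "upper_triangular B"
  shows "upper_triangular (B ^\<^sub>m k) \<and> (\<forall>i<n. (B ^\<^sub>m k) $$ (i,i) = B $$ (i,i) ^ k)"
proof (induction k)
  case 0
  then show ?case using B by auto
next
  case (Suc k)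
  have "B ^\<^sub>m k \<in> carrier_mat n n" using B by simp
  with Suc.IH B upper_triangular_mult[of "B ^\<^sub>m k" n B] show ?case by simp
qed

lemma mat_trace_pow_char_poly_roots:
  fixes A :: "'a::conjugatable_ordered_field mat"
  assumes A: "A \<in> carrier_mat n n" and cp: "char_poly A = (\<Prod>e\<leftarrow>es. [:-e,1:])"
  shows "mat_trace (A ^\<^sub>m k) = (\<Sum>e\<leftarrow>es. e ^ k)"
proof -
  obtain B P Q where sd: "schur_decomposition A es = (B,P,Q)"
    by (cases "schur_decomposition A es") auto
  from schur_decomposition[OF A cp sd] have wit: "similar_mat_wit A B P Q"
    and ut: "upper_triangular B" and dg: "diag_mat B = es" by auto
  from wit A have B: "B \<in> carrier_mat n n" and P: "P \<in> carrier_mat n n"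
    and Q: "Q \<in> carrier_mat n n" and QP: "Q * P = 1\<^sub>m n"
    unfolding similar_mat_wit_def Let_def by auto
  have Bk: "B ^\<^sub>m k \<in> carrier_mat n n" using B by simp
  have "mat_trace (A ^\<^sub>m k) = mat_trace (P * B ^\<^sub>m k * Q)"
    using similar_mat_wit_pow_id[OF wit] by simp
  also have "\<dots> = mat_trace (Q * (P * B ^\<^sub>m k))"
    using P Bk Q by (intro mat_trace_mult_comm[of _ n n]) auto
  also have "Q * (P * B ^\<^sub>m k) = B ^\<^sub>m k"
    using P Bk Q QP by (simp add: assoc_mult_mat[symmetric] left_mult_one_mat)
  also have "mat_trace (B ^\<^sub>m k) = (\<Sum>i<n. B $$ (i,i) ^ k)"
    unfolding mat_trace_def using upper_triangular_pow[OF B ut, of k] B by simp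
  also have "\<dots> = (\<Sum>e\<leftarrow>es. e ^ k)"
    unfolding dg[symmetric] diag_mat_def using B
    by (simp add: sum_list_sum_nth atLeast0LessThan)
  finally show ?thesis .
qed

section \<open>Closed walks of length two and three\<close>

lemma adj_matrix_carrier: "adj_matrix n E \<in> carrier_mat n n"
  by (simp add: adj_matrix_def)

lemma adj_matrix_symmetric:
  assumes "simple_graph n E" "i < n" "j < n"
  shows "adj_matrix n E $$ (i,j) = adj_matrix n E $$ (j,i)"
  using assms by (simp add: adj_matrix_def simple_graph_def)

lemma mat_trace_adj_matrix_square:
  assumes G: "simple_graph n E"
  shows "mat_trace (adj_matrix n E ^\<^sub>m 2) = real (card {(i,j). i<n \<and> j<n \<and> E i j})"
proof -
  let ?A = "adj_matrix n E"
  have sym: "E i j \<longleftrightarrow> E j i" if "i < n" "j < n" for i j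
    using G that unfolding simple_graph_def by auto
  have "?A ^\<^sub>m 2 = ?A * ?A"
    using adj_matrix_carrier by (simp add: numeral_2_eq_2)
  then have "mat_trace (?A ^\<^sub>m 2) = (\<Sum>i<n. \<Sum>j<n. of_bool (E i j))"
    unfolding mat_trace_def using sym
    by (auto simp: scalar_prod_def adj_matrix_def atLeast0LessThan of_bool_def
        simp del: sum_of_bool_eq intro!: sum.cong)
  also have "\<dots> = (\<Sum>(i,j)\<in>{..<n}\<times>{..<n}. of_bool (E i j))"
    by (simp only: sum.cartesian_product)
  also have "\<dots> = (\<Sum>p\<in>{..<n}\<times>{..<n}. of_bool (case_prod E p))"
    by (rule sum.cong) auto
  also have "\<dots> = real (card ({..<n}\<times>{..<n} \<inter> {p. case_prod E p}))"
    by (rule sum_of_bool_eq) simp_all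
  also have "{..<n}\<times>{..<n} \<inter> {p. case_prod E p} = {(i,j). i<n \<and> j<n \<and> E i j}"
    by auto
  finally show ?thesis .
qed

lemma mat_trace_adj_matrix_cube:
  "mat_trace (adj_matrix n E ^\<^sub>m 3)
           = real (card {(i,j,l). i<n \<and> j<n \<and> l<n \<and> E i j \<and> E j l \<and> E l i})"
proof -
  let ?A = "adj_matrix n E"
  have "?A ^\<^sub>m 3 = ?A * ?A * ?A"
    using adj_matrix_carrier by (simp add: numeral_3_eq_3)
  moreover have "(?A * ?A) $$ (i,l) = (\<Sum>j<n. of_bool (E i j \<and> E j l))" if "i<n" "l<n" for i l
    using that by (auto simp: scalar_prod_def adj_matrix_def atLeast0LessThan of_bool_def
        simp del: sum_of_bool_eq intro!: sum.cong)
  ultimately have "mat_trace (?A ^\<^sub>m 3) = (\<Sum>i<n. \<Sum>l<n. \<Sum>j<n. of_bool (E i j \<and> E j l \<and> E l i))"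
    unfolding mat_trace_def
    by (auto simp: scalar_prod_def adj_matrix_def atLeast0LessThan sum_distrib_right of_bool_def
        simp del: sum_of_bool_eq intro!: sum.cong)
  also have "\<dots> = (\<Sum>i<n. \<Sum>j<n. \<Sum>l<n. of_bool (E i j \<and> E j l \<and> E l i))"
    by (rule sum.cong[OF refl], rule sum.swap)
  also have "\<dots> = (\<Sum>(i,j,l)\<in>{..<n}\<times>{..<n}\<times>{..<n}. of_bool (E i j \<and> E j l \<and> E l i))"
    by (simp only: sum.cartesian_product)
  also have "\<dots> = (\<Sum>p\<in>{..<n}\<times>{..<n}\<times>{..<n}. of_bool (case p of (i,j,l) \<Rightarrow> E i j \<and> E j l \<and> E l i))"
    by (rule sum.cong) auto
  also have "\<dots> = real (card ({..<n}\<times>{..<n}\<times>{..<n} \<inter> {(i,j,l). E i j \<and> E j l \<and> E l i}))"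
    by (rule sum_of_bool_eq) simp_all
  also have "{..<n}\<times>{..<n}\<times>{..<n} \<inter> {(i,j,l). E i j \<and> E j l \<and> E l i}
               = {(i,j,l). i<n \<and> j<n \<and> l<n \<and> E i j \<and> E j l \<and> E l i}"
    by auto
  finally show ?thesis .
qed

lemma card_adjacent_pairs:
  assumes G: "simple_graph n E"
  shows "card {(i,j). i<n \<and> j<n \<and> E i j} = 2 * num_edges n E"
proof -
  let ?U = "{(i,j). i<j \<and> j<n \<and> E i j}"
  let ?V = "{(i,j). j<i \<and> i<n \<and> E i j}"
  have fin: "finite ?U" by (rule finite_subset[of _ "{..<n} \<times> {..<n}"]) auto
  have split: "{(i,j). i<n \<and> j<n \<and> E i j} = ?U \<union> ?V"
    using G unfolding simple_graph_def by (auto, metis linorder_neqE_nat)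
  have V: "?V = prod.swap ` ?U"
    using G unfolding simple_graph_def by (auto simp: image_iff)
  have "card ?V = card ?U" unfolding V by (rule card_image) simp
  moreover have "?U \<inter> ?V = {}" by auto
  ultimately show ?thesis
    unfolding split num_edges_def using fin V by (simp add: card_Un_disjoint)
qed

lemma card_triangle_walks:
  assumes G: "simple_graph n E"
  shows "card {(i,j,l). i<n \<and> j<n \<and> l<n \<and> E i j \<and> E j l \<and> E l i} = 6 * num_triangles n E"
proof -
  let ?T = "{(i,j,l). i<n \<and> j<n \<and> l<n \<and> E i j \<and> E j l \<and> E l i}"
  let ?K = "{S. is_clique n E S \<and> card S = 3}"
  let ?f = "\<lambda>(i::nat,j::nat,l::nat). {i,j,l}"
  have irr: "\<not> E i i" if "i < n" for i using G that unfolding simple_graph_def by auto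
  have sym: "E i j \<longleftrightarrow> E j i" if "i < n" "j < n" for i j
    using G that unfolding simple_graph_def by auto
  have finT: "finite ?T" by (rule finite_subset[of _ "{..<n} \<times> {..<n} \<times> {..<n}"]) auto
  have finK: "finite ?K" by (rule finite_subset[of _ "Pow {..<n}"]) (auto simp: is_clique_def)
  have T_fibres: "?T = (\<Union>S\<in>?K. {x\<in>?T. ?f x = S})"
  proof (intro equalityI subsetI)
    fix x assume x: "x \<in> ?T"
    obtain i j l where xe: "x = (i,j,l)" by (cases x) auto
    have "i \<noteq> j" "j \<noteq> l" "l \<noteq> i" using x irr unfolding xe by auto
    moreover have "is_clique n E {i,j,l}" using x sym unfolding xe is_clique_def by auto
    ultimately show "x \<in> (\<Union>S\<in>?K. {x\<in>?T. ?f x = S})" using x xe by auto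
  qed auto
  have fibre: "card {x\<in>?T. ?f x = S} = 6" if S: "S \<in> ?K" for S
  proof -
    obtain a b c where abc: "S = {a,b,c}" "a \<noteq> b" "a \<noteq> c" "b \<noteq> c"
      using S by (auto simp: card_3_iff)
    have cl: "a < n" "b < n" "c < n" "E a b" "E b c" "E a c"
      using S abc unfolding is_clique_def by auto
    have "{x\<in>?T. ?f x = S} = {(a,b,c),(a,c,b),(b,a,c),(b,c,a),(c,a,b),(c,b,a)}"
    proof (intro equalityI subsetI)
      fix x assume x: "x \<in> {x\<in>?T. ?f x = S}"
      obtain i j l where xe: "x = (i,j,l)" by (cases x) auto
      have d: "i \<noteq> j" "j \<noteq> l" "l \<noteq> i" using x irr unfolding xe by auto
      have "{i,j,l} = {a,b,c}" using x abc unfolding xe by auto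
      then have "i \<in> {a,b,c}" "j \<in> {a,b,c}" "l \<in> {a,b,c}" "a \<in> {i,j,l}" "b \<in> {i,j,l}" "c \<in> {i,j,l}"
        by blast+
      with d show "x \<in> {(a,b,c),(a,c,b),(b,a,c),(b,c,a),(c,a,b),(c,b,a)}"
        unfolding xe by fastforce
    next
      fix x assume "x \<in> {(a,b,c),(a,c,b),(b,a,c),(b,c,a),(c,a,b),(c,b,a)}"
      then show "x \<in> {x\<in>?T. ?f x = S}" using cl sym abc by auto
    qed
    then show ?thesis using abc by simp
  qed
  have "card ?T = (\<Sum>S\<in>?K. card {x\<in>?T. ?f x = S})"
    by (subst T_fibres, rule card_UN_disjoint) (use finK finT in auto)
  also have "\<dots> = 6 * card ?K" using fibre by simp
  finally show ?thesis unfolding num_triangles_def .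
qed

section \<open>The ordered spectrum of a graph\<close>

lemma proots_prod_linear_factors:
  "proots (\<Prod>a\<leftarrow>es. [:-a,1::'a::idom:]) = mset es"
proof (induction es)
  case (Cons a es)
  have "(\<Prod>a\<leftarrow>es. [:-a,1::'a:]) \<noteq> 0"
    by (auto simp: prod_list_zero_iff)
  then have "proots ([:-a,1:] * (\<Prod>a\<leftarrow>es. [:-a,1:])) = proots [:-a,1:] + mset es"
    using Cons.IH by (subst proots_mult) simp_all
  then show ?case by simp
qed simp

lemma sorted_wrt_eigs: "sorted_wrt (\<ge>) (eigs n E)"
  unfolding eigs_def by (simp add: sorted_wrt_rev)

lemma n_pos_eq_length_filter_eigs: "n_pos n E = length (filter (\<lambda>x. x > 0) (eigs n E))"
  unfolding n_pos_def eigs_def by (metis mset_filter mset_rev mset_sorted_list_of_multiset size_mset)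

lemma nth_pos_if_less_length_filter_pos:
  fixes xs :: "real list"
  assumes "sorted_wrt (\<ge>) xs" "i < length (filter (\<lambda>x. x > 0) xs)"
  shows "xs ! i > 0"
  using assms
proof (induction xs arbitrary: i)
  case (Cons x xs)
  show ?case
  proof (cases "x > 0")
    case False
    with Cons.prems(1) have "filter (\<lambda>x. x > 0) xs = []"
      by (auto simp: filter_empty_conv)
    with False Cons.prems(2) show ?thesis by simp
  next
    case True
    with Cons show ?thesis by (cases i) auto
  qed
qed simp

lemma adj_matrix_spectrum:
  assumes "simple_graph n E"
  obtains es where "char_poly (adj_matrix n E) = (\<Prod>a\<leftarrow>es. [:-a,1:])"
    and "mset (eigs n E) = mset es" and "length es = n"
  using char_poly_real_symmetric_splits[OF adj_matrix_carrier adj_matrix_symmetric[OF assms]]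
  by (metis eig_mset_def eigs_def mset_rev mset_sorted_list_of_multiset proots_prod_linear_factors)

lemma length_eigs:
  assumes "simple_graph n E"
  shows "length (eigs n E) = n"
  using adj_matrix_spectrum[OF assms] by (metis size_mset)

lemma sum_eigs_power:
  assumes G: "simple_graph n E"
  shows "(\<Sum>i<n. eigs n E ! i ^ k) = mat_trace (adj_matrix n E ^\<^sub>m k)"
proof -
  obtain es where cp: "char_poly (adj_matrix n E) = (\<Prod>a\<leftarrow>es. [:-a,1:])"
    and ms: "mset (eigs n E) = mset es"
    using adj_matrix_spectrum[OF G] .
  have "(\<Sum>i<n. eigs n E ! i ^ k) = (\<Sum>x\<leftarrow>eigs n E. x ^ k)"
    using length_eigs[OF G] by (simp add: sum_list_sum_nth atLeast0LessThan)
  also have "\<dots> = (\<Sum>x\<leftarrow>es. x ^ k)"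
    by (metis ms mset_map sum_mset_sum_list)
  also have "\<dots> = mat_trace (adj_matrix n E ^\<^sub>m k)"
    using mat_trace_pow_char_poly_roots[OF adj_matrix_carrier cp] by simp
  finally show ?thesis .
qed

lemma sum_eigs_square:
  assumes "simple_graph n E"
  shows "(\<Sum>i<n. eigs n E ! i ^ 2) = 2 * real (num_edges n E)"
  using sum_eigs_power[OF assms, of 2] mat_trace_adj_matrix_square[OF assms] card_adjacent_pairs[OF assms]
  by simp

lemma sum_eigs_cube:
  assumes "simple_graph n E"
  shows "(\<Sum>i<n. eigs n E ! i ^ 3) = 6 * real (num_triangles n E)"
  using sum_eigs_power[OF assms, of 3] mat_trace_adj_matrix_cube card_triangle_walks[OF assms]
  by simp

section \<open>Moment inequalities\<close>

lemma sum_squares_cube_le: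
  fixes x :: "nat \<Rightarrow> real"
  assumes nonneg: "\<And>i. i < l \<Longrightarrow> x i \<ge> 0"
  shows "(\<Sum>i<l. x i ^ 2) ^ 3 \<le> real l * (\<Sum>i<l. x i ^ 3) ^ 2"
proof -
  let ?P = "\<Sum>i<l. x i ^ 2" and ?S = "\<Sum>i<l. x i" and ?C = "\<Sum>i<l. x i ^ 3"
  have "?P = (\<Sum>i<l. sqrt (x i) * (x i * sqrt (x i)))"
    by (intro sum.cong refl) (use nonneg in \<open>simp add: power2_eq_square mult.assoc[symmetric]\<close>)
  moreover have "?S = (\<Sum>i<l. (sqrt (x i))\<^sup>2)" using nonneg by simp
  moreover have "?C = (\<Sum>i<l. (x i * sqrt (x i))\<^sup>2)"
    by (intro sum.cong refl) (use nonneg in \<open>simp add: power_mult_distrib power3_eq_cube power2_eq_square\<close>)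
  ultimately have PSC: "?P ^ 2 \<le> ?S * ?C"
    using Cauchy_Schwarz_ineq_sum[of "\<lambda>i. sqrt (x i)" "\<lambda>i. x i * sqrt (x i)" "{..<l}"] by simp
  have SP: "?S ^ 2 \<le> real l * ?P"
    using Cauchy_Schwarz_ineq_sum[of "\<lambda>i. 1" x "{..<l}"] by simp
  have "?P * ?P ^ 3 = (?P ^ 2) ^ 2" by (simp add: eval_nat_numeral)
  also have "\<dots> \<le> ?S ^ 2 * ?C ^ 2"
    using power_mono[OF PSC, of 2] by (simp add: power_mult_distrib sum_nonneg)
  also have "\<dots> \<le> ?P * (real l * ?C ^ 2)"
    using mult_right_mono[OF SP, of "?C ^ 2"] by (simp add: mult_ac)
  finally have "?P * ?P ^ 3 \<le> ?P * (real l * ?C ^ 2)" .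
  moreover have "?P \<ge> 0" by (simp add: sum_nonneg)
  ultimately show ?thesis
    by (cases "?P = 0") auto
qed

lemma sum_cubes_ge:
  fixes x :: "nat \<Rightarrow> real"
  assumes "finite J"
  shows "- ((\<Sum>i\<in>J. x i ^ 2) * sqrt (\<Sum>i\<in>J. x i ^ 2)) \<le> (\<Sum>i\<in>J. x i ^ 3)"
proof -
  let ?R = "\<Sum>i\<in>J. x i ^ 2"
  have "- (x i ^ 2 * sqrt ?R) \<le> x i ^ 3" if i: "i \<in> J" for i
  proof -
    have "x i ^ 2 \<le> ?R" using assms i by (intro member_le_sum) auto
    then have "\<bar>x i\<bar> \<le> sqrt ?R" using real_sqrt_le_mono by fastforce
    then have "x i ^ 2 * \<bar>x i\<bar> \<le> x i ^ 2 * sqrt ?R" by (intro mult_left_mono) auto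
    moreover have "- (x i ^ 2 * \<bar>x i\<bar>) \<le> x i ^ 3"
      by (cases "x i \<ge> 0") (auto simp: power2_eq_square power3_eq_cube)
    ultimately show ?thesis by linarith
  qed
  then have "(\<Sum>i\<in>J. - (x i ^ 2 * sqrt ?R)) \<le> (\<Sum>i\<in>J. x i ^ 3)" by (intro sum_mono)
  then show ?thesis by (simp add: sum_negf sum_distrib_right)
qed

lemma clique_margin_cleared:
  fixes k :: nat assumes k: "k \<ge> 3"
  shows "6 * real k ^ 2 \<le> 20.12 * sqrt 2 * ((real k - 1) * sqrt (real k * (real k - 1)) - real k)"
proof -
  have s2: "sqrt 2 \<ge> 1.41421" by (rule real_le_rsqrt) (simp add: power2_eq_square)
  show ?thesis
  proof (cases "k = 3")
    case True
    have s6: "sqrt 6 \<ge> 2.44948" by (rule real_le_rsqrt) (simp add: power2_eq_square)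
    have "20.12 * 1.41421 * (2 * 2.44948 - 3) \<le> 20.12 * sqrt 2 * (2 * sqrt 6 - 3)"
      using s2 s6 by (intro mult_mono) auto
    then show ?thesis using True by simp
  next
    case False
    then have k4: "real k \<ge> 4" using k by simp
    define Y where "Y = (real k - 1) * sqrt (real k * (real k - 1)) - real k"
    have "real k - 3/5 \<le> sqrt (real k * (real k - 1))"
      by (rule real_le_rsqrt) (use k4 in \<open>simp add: power2_eq_square algebra_simps\<close>)
    then have "(real k - 1) * (real k - 3/5) - real k \<le> Y"
      unfolding Y_def using k4 by (intro diff_right_mono mult_left_mono) auto
    moreover have "(real k - 1) * (real k - 3/5) - real k = real k * real k - 13/5 * real k + 3/5"
      by (simp add: field_simps)
    ultimately have Y: "real k * real k - 13/5 * real k + 3/5 \<le> Y"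
      by linarith
    have kk: "4 * real k \<le> real k * real k" using k4 by (intro mult_right_mono) auto
    have "0 \<le> Y" using Y kk k4 by linarith
    then have "28 * Y \<le> 20.12 * sqrt 2 * Y"
      using s2 by (intro mult_right_mono) auto
    moreover have "6 * (real k * real k) \<le> 28 * Y" using Y kk k4 by linarith
    ultimately show ?thesis unfolding Y_def power2_eq_square by linarith
  qed
qed

(* The right-hand side is the lower bound for (C - R^(3/2)) / m^(3/2) forced by P > 2m (1 - 1/w);
   the constant 10.06 is what makes it beat the triangle bound already at w = 3. *)
lemma clique_margin:
  fixes k :: nat assumes k: "k \<ge> 3"
  shows "6 / (10.06 * sqrt k)
           \<le> 2 * sqrt 2 * ((real k - 1) * sqrt (real k - 1) / real k ^ 2 - 1 / (real k * sqrt k))"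
proof -
  define w where "w = real k"
  have w: "w \<ge> 3" using k unfolding w_def by simp
  have scale: "0 < w ^ 2 * sqrt w" using w by simp
  have e1: "(w - 1) * sqrt (w - 1) / w ^ 2 * (w ^ 2 * sqrt w) = (w - 1) * (sqrt w * sqrt (w - 1))"
    using w by (simp add: field_simps)
  have e2: "1 / (w * sqrt w) * (w ^ 2 * sqrt w) = w"
    using w by (simp add: field_simps power2_eq_square)
  have "(6 / (10.06 * sqrt w)) * (w ^ 2 * sqrt w) = 6 * w ^ 2 / 20.12 * 2"
    using w by (simp add: field_simps)
  also have "\<dots> \<le> 2 * sqrt 2 * ((w - 1) * (sqrt w * sqrt (w - 1)) - w)"
    using clique_margin_cleared[OF k, unfolded real_sqrt_mult] unfolding w_def by (simp add: field_simps)
  also have "\<dots> = 2 * sqrt 2 * ((w - 1) * sqrt (w - 1) / w ^ 2 * (w ^ 2 * sqrt w)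
                                   - 1 / (w * sqrt w) * (w ^ 2 * sqrt w))"
    by (simp only: e1 e2)
  also have "\<dots> = 2 * sqrt 2 * ((w - 1) * sqrt (w - 1) / w ^ 2 - 1 / (w * sqrt w)) * (w ^ 2 * sqrt w)"
    by (simp add: left_diff_distrib)
  finally show ?thesis
    unfolding w_def[symmetric] using scale by (simp only: mult_le_cancel_right_pos)
qed

lemma prefix_bound_from_moments:
  fixes P R C D m :: real and k :: nat
  assumes k: "k \<ge> 3" and m: "m > 0" and PR: "P + R = 2 * m" and R: "R \<ge> 0" and C: "C \<ge> 0"
    and PC: "P ^ 3 \<le> real k * C ^ 2" and DR: "- (R * sqrt R) \<le> D"
    and CD: "C + D \<le> 6 * (m * sqrt m) / (10.06 * sqrt k)"
  shows "P \<le> 2 * m * (1 - 1 / real k)"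
proof (rule ccontr)
  define w where "w = real k"
  have w: "w \<ge> 3" using k unfolding w_def by simp
  assume "\<not> ?thesis"
  then have P: "2 * m * (w - 1) / w < P"
    using w unfolding w_def by (simp add: field_simps)
  define Y where "Y = 2 * sqrt 2 * (m * sqrt m) * ((w - 1) * sqrt (w - 1) / w ^ 2)"
  have cube: "(x * sqrt x) ^ 2 = x ^ 3" if "x \<ge> 0" for x :: real
    using that by (simp add: power_mult_distrib power2_eq_square power3_eq_cube)
  have "Y ^ 2 = (2 * sqrt 2) ^ 2 * (m * sqrt m) ^ 2 * ((w - 1) * sqrt (w - 1)) ^ 2 / (w ^ 2) ^ 2"
    unfolding Y_def by (simp add: power_mult_distrib power_divide)
  also have "\<dots> = (2 * m * (w - 1) / w) ^ 3 / w"
    using m w by (simp add: cube power_mult_distrib power_divide field_simps eval_nat_numeral)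
  also have "\<dots> < P ^ 3 / w"
    using P m w by (intro divide_strict_right_mono power_strict_mono) auto
  also have "\<dots> \<le> C ^ 2"
    using PC w unfolding w_def by (simp add: field_simps)
  finally have C_low: "Y < C"
    using C by (simp add: power_less_imp_less_base)
  have "2 * m * w - 2 * m < P * w"
    using P w by (simp add: field_simps)
  moreover have "R = 2 * m - P"
    using PR by linarith
  then have "R * w = 2 * m * w - P * w"
    by (simp add: left_diff_distrib)
  ultimately have "R < 2 * m / w"
    using w by (simp add: field_simps)
  then have "R * sqrt R \<le> (2 * m / w) * sqrt (2 * m / w)"
    using R by (intro mult_mono) auto
  also have "\<dots> = 2 * sqrt 2 * (m * sqrt m) * (1 / (w * sqrt w))"
    using m w by (simp add: real_sqrt_mult real_sqrt_divide field_simps)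
  finally have D_low: "- (2 * sqrt 2 * (m * sqrt m) * (1 / (w * sqrt w))) \<le> D"
    using DR by linarith
  have "6 * (m * sqrt m) / (10.06 * sqrt w)
          \<le> m * sqrt m * (2 * sqrt 2 * ((w - 1) * sqrt (w - 1) / w ^ 2 - 1 / (w * sqrt w)))"
    using mult_left_mono[OF clique_margin[OF k], of "m * sqrt m"] m unfolding w_def by simp
  also have "\<dots> < C + D"
    using C_low D_low unfolding Y_def by (simp add: algebra_simps)
  finally show False
    using CD unfolding w_def by simp
qed

lemma sum_prefix_squares_bound:
  fixes x :: "nat \<Rightarrow> real" and m :: real
  assumes k: "k \<ge> 3" and "l \<le> k" "l \<le> n" and m: "m > 0"
    and nonneg: "\<And>i. i < l \<Longrightarrow> x i \<ge> 0"
    and squares: "(\<Sum>i<n. x i ^ 2) = 2 * m"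
    and cubes: "(\<Sum>i<n. x i ^ 3) \<le> 6 * (m * sqrt m) / (10.06 * sqrt k)"
  shows "(\<Sum>i<l. x i ^ 2) \<le> 2 * m * (1 - 1 / real k)"
proof -
  have split: "(\<Sum>i<n. f i) = (\<Sum>i<l. f i) + (\<Sum>i\<in>{l..<n}. f i)" for f :: "nat \<Rightarrow> real"
    using sum.atLeastLessThan_concat[of 0 l n f] \<open>l \<le> n\<close> by (simp add: atLeast0LessThan)
  define P R C D where "P = (\<Sum>i<l. x i ^ 2)" and "R = (\<Sum>i\<in>{l..<n}. x i ^ 2)"
    and "C = (\<Sum>i<l. x i ^ 3)" and "D = (\<Sum>i\<in>{l..<n}. x i ^ 3)"
  have "P ^ 3 \<le> real l * C ^ 2"
    unfolding P_def C_def using nonneg by (rule sum_squares_cube_le)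
  also have "\<dots> \<le> real k * C ^ 2"
    using \<open>l \<le> k\<close> by (intro mult_right_mono) auto
  finally have PC: "P ^ 3 \<le> real k * C ^ 2" .
  have PR: "P + R = 2 * m" and CD: "C + D \<le> 6 * (m * sqrt m) / (10.06 * sqrt k)"
    using squares cubes split unfolding P_def R_def C_def D_def by simp_all
  have "R \<ge> 0" "C \<ge> 0"
    unfolding R_def C_def using nonneg by (auto intro!: sum_nonneg)
  moreover have "- (R * sqrt R) \<le> D"
    unfolding R_def D_def by (rule sum_cubes_ge) simp
  ultimately show ?thesis
    using prefix_bound_from_moments[OF k m PR _ _ PC _ CD] unfolding P_def by blast
qed

section \<open>Consequences of the hypotheses\<close>

lemma num_edges_pos:
  assumes "clique_number n E \<ge> 2"
  shows "num_edges n E > 0"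
proof -
  let ?C = "{S. is_clique n E S}"
  have "finite ?C" by (rule finite_subset[of _ "Pow {..<n}"]) (auto simp: is_clique_def)
  moreover have "{} \<in> ?C" by (simp add: is_clique_def)
  ultimately have "clique_number n E \<in> card ` ?C"
    unfolding clique_number_def by (intro Max_in) auto
  then obtain S where S: "is_clique n E S" and "card S \<ge> 2" using assms by auto
  then obtain T where "T \<subseteq> S" "card T = 2"
    by (meson obtain_subset_with_card_n)
  then obtain a b where ab: "a \<in> S" "b \<in> S" "a \<noteq> b"
    by (auto simp: card_2_iff)
  then have "(min a b, max a b) \<in> {(i,j). i < j \<and> j < n \<and> E i j}"
    using S unfolding is_clique_def by (auto simp: min_def max_def)
  moreover have "finite {(i,j). i < j \<and> j < n \<and> E i j}"
    by (rule finite_subset[of _ "{..<n} \<times> {..<n}"]) auto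
  ultimately show ?thesis unfolding num_edges_def card_gt_0_iff by blast
qed

lemma le_powr_if_powr_inverse_le:
  fixes X m \<epsilon> :: real
  assumes "\<epsilon> > 0" "X > 0" "X powr (1 / \<epsilon>) \<le> m"
  shows "X \<le> m powr \<epsilon>"
proof -
  have "X = (X powr (1 / \<epsilon>)) powr \<epsilon>" using assms by (simp add: powr_powr)
  also have "\<dots> \<le> m powr \<epsilon>" using assms by (intro powr_mono2) auto
  finally show ?thesis .
qed

lemma le_div_if_le_powr_three_halves:
  fixes t m c \<epsilon> K :: real
  assumes "c > 0" "K > 0" "m > 0"
    and "t \<le> c * m powr (1.5 - \<epsilon>)" and "c * K \<le> m powr \<epsilon>"
  shows "t \<le> m * sqrt m / K"
proof -
  have "m powr (1 + 1/2) = m * sqrt m"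
    using assms by (subst powr_add) (simp add: powr_half_sqrt)
  then have "m powr (1.5 - \<epsilon>) = m * sqrt m / m powr \<epsilon>"
    by (simp add: powr_diff)
  then have "t \<le> c * (m * sqrt m / m powr \<epsilon>)" using assms by simp
  also have "\<dots> \<le> c * (m * sqrt m / (c * K))"
    using assms by (intro mult_left_mono divide_left_mono) auto
  also have "\<dots> = m * sqrt m / K" using assms by simp
  finally show ?thesis .
qed

theorem mainTheorem3:
  fixes n :: nat and E :: "nat \<Rightarrow> nat \<Rightarrow> bool" and \<epsilon> c :: real
  assumes "simple_graph n E"
    and "\<epsilon> > 0" and "c > 0"
    and "clique_number n E \<ge> 3"
    and "real (num_triangles n E) \<le> c * real (num_edges n E) powr (1.5 - \<epsilon>)"
    and "real (num_edges n E) \<ge> (10.06 * c * sqrt (real (clique_number n E))) powr (1 / \<epsilon>)"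
  shows "Lambda_k n E (min (n_pos n E) (clique_number n E))
           \<le> 2 * (1 - 1 / real (clique_number n E))"
proof -
  let ?m = "real (num_edges n E)" and ?\<omega> = "clique_number n E"
  define l where "l = min (n_pos n E) ?\<omega>"
  have m: "?m > 0" using num_edges_pos assms(4) by simp
  have "10.06 * c * sqrt ?\<omega> \<le> ?m powr \<epsilon>"
    using assms by (intro le_powr_if_powr_inverse_le) auto
  then have "real (num_triangles n E) \<le> ?m * sqrt ?m / (10.06 * sqrt ?\<omega>)"
    using assms m by (intro le_div_if_le_powr_three_halves) (auto simp: mult_ac)
  moreover have "l \<le> n"
    unfolding l_def using n_pos_eq_length_filter_eigs length_eigs[OF assms(1)]
    by (metis length_filter_le min.coboundedI1)
  moreover have "eigs n E ! i \<ge> 0" if "i < l" for i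
    using nth_pos_if_less_length_filter_pos[OF sorted_wrt_eigs] that
    unfolding l_def n_pos_eq_length_filter_eigs by (simp add: less_imp_le)
  ultimately have "(\<Sum>i<l. eigs n E ! i ^ 2) \<le> 2 * ?m * (1 - 1 / real ?\<omega>)"
    using assms(1,4) m sum_eigs_square sum_eigs_cube
    by (intro sum_prefix_squares_bound[of ?\<omega> l n]) (auto simp: l_def)
  then have "(\<Sum>i<l. eigs n E ! i ^ 2) / ?m \<le> 2 * ?m * (1 - 1 / real ?\<omega>) / ?m"
    using m by (intro divide_right_mono) auto
  then show ?thesis
    unfolding Lambda_k_def s_k_def l_def[symmetric] using m by simp
qed

end
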